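(* If $F(z,t)=\sum_{n\ge1}\sum_{m\ge0}a_{n,m}z^nt^m$ is very nice, then $\mathcal N F(z,t)$ is nice.
   Context: A bivariate series $F(z,t)$ is nice if $F(z,z^k)$ is a rational function of $z$ for every integer $k\ge0$; it is very nice if it is nice and $F(z,0)$ is also rational. For $G(z,t)=\sum_{n\ge1}\sum_{m\ge0}a_{n,m}z^nt^m$, $\mathcal N G(z,t)=G(z,0)+\sum_{n\ge1}\sum_{m\ge1}a_{n,m}\frac{1}{1-z^m}\cdot\frac{1-(tz)^m}{1-tz}z^n$. *)

theory Defs
  imports "HOL-Computational_Algebra.Computational_Algebra"
begin

text \<open>A bivariate series F(z,t) = sum a_{n,m} z^n t^m is represented as a formal power
series in z whose coefficients are polynomials in t:  a_{n,m} = coeff (F $ n) m.\<close>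

definition bcoeff :: "'a::zero poly fps \<Rightarrow> nat \<Rightarrow> nat \<Rightarrow> 'a" where
  "bcoeff F n m = coeff (F $ n) m"

definition rational_fps :: "'a::field fps \<Rightarrow> bool" where
  "rational_fps f \<longleftrightarrow> (\<exists>p q. coeff q 0 \<noteq> 0 \<and> f * fps_of_poly q = fps_of_poly p)"

text \<open>The substitution t := z^k, i.e. F(z, z^k).  (For k = 0 this is F(z,1).)\<close>
definition subst_tpow :: "'a::comm_ring_1 poly fps \<Rightarrow> nat \<Rightarrow> 'a fps" where
  "subst_tpow F k = Abs_fps (\<lambda>N. \<Sum>n\<le>N. \<Sum>m\<le>degree (F $ n).
       if n + k * m = N then bcoeff F n m else 0)"

definition subst_tzero :: "'a::comm_ring_1 poly fps \<Rightarrow> 'a fps" where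
  "subst_tzero F = Abs_fps (\<lambda>n. bcoeff F n 0)"

definition nice :: "'a::field poly fps \<Rightarrow> bool" where
  "nice F \<longleftrightarrow> (\<forall>k. rational_fps (subst_tpow F k))"

definition very_nice :: "'a::field poly fps \<Rightarrow> bool" where
  "very_nice F \<longleftrightarrow> nice F \<and> rational_fps (subst_tzero F)"

text \<open>The series 1/(1 - z^m) (for m \<ge> 1), with coefficients in 'a poly.\<close>
definition geom_fps :: "nat \<Rightarrow> 'a::comm_ring_1 poly fps" where
  "geom_fps m = Abs_fps (\<lambda>r. if m dvd r then 1 else 0)"

text \<open>The series  1/(1-z^m) * (1-(tz)^m)/(1-tz) * z^n  as a bivariate series.\<close>
definition N_term :: "nat \<Rightarrow> nat \<Rightarrow> 'a::comm_ring_1 poly fps" where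
  "N_term n m = geom_fps m * (\<Sum>i<m. (fps_const [:0, 1:] * fps_X) ^ i) * fps_X ^ n"

text \<open>The operator N:  N G(z,t) = G(z,0) + sum_{n\<ge>1, m\<ge>1} a_{n,m} N_term n m.
  Only finitely many terms contribute to each z-coefficient.\<close>
definition N_op :: "'a::comm_ring_1 poly fps \<Rightarrow> 'a poly fps" where
  "N_op G = Abs_fps (\<lambda>N. [:bcoeff G N 0:] +
      (\<Sum>n\<in>{1..N}. \<Sum>m\<in>{1..degree (G $ n)}. smult (bcoeff G n m) (N_term n m $ N)))"

end

theory Submission
  imports Defs
begin

text \<open>The substitution \<open>G(z,t) \<mapsto> G(z,z^k)\<close> is a ring homomorphism. It maps
  \<open>N_term n m\<close> to \<open>z^n (1 - z^((k+1)m)) / ((1 - z^m)(1 - z^(k+1)))\<close>, and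
  \<open>(1 - z^((k+1)m)) / (1 - z^m) = \<Sum>j\<le>k. z^(jm)\<close>, where \<open>z^(jm) z^n\<close> is the image of
  \<open>t^m z^n\<close> under \<open>t := z^j\<close>. Summing over all terms gives
  \<open>(1 - z^(k+1)) NF(z,z^k) = (1 - z^(k+1)) F(z,0) + (\<Sum>j\<le>k. F(z,z^j) - F(z,0))\<close>,
  whose right-hand side is rational when \<open>F\<close> is very nice. The infinite sums are handled
  by truncation: coefficient \<open>N\<close> of either side only involves the terms with \<open>n \<le> N\<close>.\<close>

lemma pcompose_monom_monom:
  "pcompose (monom c m) (monom 1 k) = (monom c (k * m) :: 'a::comm_ring_1 poly)"
proof (induction m arbitrary: c)
  case 0
  then show ?case by (simp add: monom_0)
next
  case (Suc m)
  have "monom c (Suc m) = [:0, 1:] * monom c m"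
    by (simp add: monom_Suc)
  then show ?case
    using Suc by (simp add: pcompose_mult pcompose_pCons mult_monom)
qed

lemma coeff_pcompose_monom:
  fixes p :: "'a::comm_ring_1 poly"
  shows "coeff (pcompose p (monom 1 k)) r = (\<Sum>m\<le>degree p. if k * m = r then coeff p m else 0)"
proof -
  have "pcompose p (monom 1 k) = (\<Sum>m\<le>degree p. monom (coeff p m) (k * m))"
    by (subst (1) poly_as_sum_of_monoms [symmetric]) (simp add: pcompose_sum pcompose_monom_monom)
  then show ?thesis by (simp add: coeff_sum)
qed

lemma fps_cutoff_mult: "fps_cutoff n (f * g) = fps_cutoff n (fps_cutoff n f * fps_cutoff n g)"
  by (rule fps_ext) (simp add: fps_cutoff_left_mult_nth fps_cutoff_right_mult_nth)

lemma fps_const_mult_X_power_nth: "(fps_const c * fps_X ^ n) $ i = (if i = n then c else 0)"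
  by simp

lemma fps_cutoff_conv_sum: "fps_cutoff n f = (\<Sum>i<n. fps_const (f $ i) * fps_X ^ i)"
  by (rule fps_ext) (simp only: fps_sum_nth fps_const_mult_X_power_nth, simp add: sum.delta')

lemma subst_tpow_nth:
  "subst_tpow G k $ N = (\<Sum>n\<le>N. coeff (pcompose (G $ n) (monom 1 k)) (N - n))"
proof -
  have "subst_tpow G k $ N =
      (\<Sum>n\<le>N. \<Sum>m\<le>degree (G $ n). if k * m = N - n then coeff (G $ n) m else 0)"
    unfolding subst_tpow_def bcoeff_def by (auto intro!: sum.cong)
  then show ?thesis by (simp add: coeff_pcompose_monom)
qed

lemma subst_tpow_sum: "subst_tpow (\<Sum>i\<in>S. G i) k = (\<Sum>i\<in>S. subst_tpow (G i) k)"
  by (rule fps_ext) (simp add: subst_tpow_nth fps_sum_nth pcompose_sum coeff_sum sum.swap[of _ S])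

lemma subst_tpow_add: "subst_tpow (G + H) k = subst_tpow G k + subst_tpow H k"
  by (rule fps_ext) (simp add: subst_tpow_nth pcompose_add sum.distrib)

lemma subst_tpow_diff: "subst_tpow (G - H) k = subst_tpow G k - subst_tpow H k"
  by (rule fps_ext) (simp add: subst_tpow_nth pcompose_diff sum_subtractf)

lemma subst_tpow_const_mult: "subst_tpow (fps_const [:c:] * G) k = fps_const c * subst_tpow G k"
  by (rule fps_ext) (simp add: subst_tpow_nth pcompose_smult sum_distrib_left)

lemma subst_tpow_monom:
  "subst_tpow (fps_const p * fps_X ^ n) k = fps_of_poly (pcompose p (monom 1 k)) * fps_X ^ n"
proof (rule fps_ext)
  fix N
  have "subst_tpow (fps_const p * fps_X ^ n) k $ N =
      (\<Sum>i\<le>N. if i = n then coeff (pcompose p (monom 1 k)) (N - n) else 0)"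
    unfolding subst_tpow_nth by (intro sum.cong refl) auto
  then show "subst_tpow (fps_const p * fps_X ^ n) k $ N =
      (fps_of_poly (pcompose p (monom 1 k)) * fps_X ^ n) $ N"
    by (simp add: fps_X_power_mult_right_nth)
qed

lemma fps_cutoff_subst_tpow:
  "fps_cutoff n (subst_tpow (fps_cutoff n G) k) = fps_cutoff n (subst_tpow G k)"
  by (rule fps_ext) (simp add: subst_tpow_nth)

lemma subst_tpow_cutoff_cong:
  "fps_cutoff n G = fps_cutoff n H \<Longrightarrow>
     fps_cutoff n (subst_tpow G k) = fps_cutoff n (subst_tpow H k)"
  by (metis fps_cutoff_subst_tpow)

lemma subst_tpow_mult_cutoff:
  "subst_tpow (fps_cutoff n G * fps_cutoff n H) k =
     subst_tpow (fps_cutoff n G) k * subst_tpow (fps_cutoff n H) k"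
proof -
  have product: "fps_cutoff n G * fps_cutoff n H =
      (\<Sum>i<n. \<Sum>j<n. fps_const (G $ i * H $ j) * fps_X ^ (i + j))"
    unfolding fps_cutoff_conv_sum sum_product
    by (intro sum.cong refl) (simp add: power_add mult_ac)
  show ?thesis
    unfolding product subst_tpow_sum subst_tpow_monom
    unfolding fps_cutoff_conv_sum subst_tpow_sum subst_tpow_monom sum_product
    by (intro sum.cong refl) (simp add: pcompose_mult fps_of_poly_mult power_add mult_ac)
qed

lemma subst_tpow_mult: "subst_tpow (G * H) k = subst_tpow G k * subst_tpow H k"
proof (rule fps_ext)
  fix N
  define n where "n = Suc N"
  have "fps_cutoff n (subst_tpow (G * H) k) = fps_cutoff n (subst_tpow (fps_cutoff n G * fps_cutoff n H) k)"
    by (metis fps_cutoff_mult fps_cutoff_subst_tpow)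
  also have "\<dots> = fps_cutoff n (subst_tpow (fps_cutoff n G) k * subst_tpow (fps_cutoff n H) k)"
    by (simp only: subst_tpow_mult_cutoff)
  also have "\<dots> = fps_cutoff n (subst_tpow G k * subst_tpow H k)"
    by (metis fps_cutoff_mult fps_cutoff_subst_tpow)
  finally show "subst_tpow (G * H) k $ N = (subst_tpow G k * subst_tpow H k) $ N"
    unfolding fps_cutoff_eq_fps_cutoff_iff n_def by simp
qed

lemma subst_tpow_const: "subst_tpow (fps_const p) k = fps_of_poly (pcompose p (monom 1 k))"
  using subst_tpow_monom[of p 0 k] by simp

lemma subst_tpow_one: "subst_tpow 1 k = 1"
  using subst_tpow_const[of 1 k] by (simp add: pcompose_1)

lemma subst_tpow_X: "subst_tpow fps_X k = fps_X"
  using subst_tpow_monom[of 1 1 k] by (simp add: pcompose_1)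

lemma subst_tpow_tvar: "subst_tpow (fps_const [:0, 1:]) k = fps_X ^ k"
  by (simp add: subst_tpow_const pcompose_pCons fps_of_poly_monom')

lemma subst_tpow_power: "subst_tpow (G ^ i) k = subst_tpow G k ^ i"
  by (induction i) (simp_all add: subst_tpow_one subst_tpow_mult)

lemma geom_fps_mult_one_minus_X_power:
  assumes "0 < m"
  shows "geom_fps m * (1 - fps_X ^ m) = 1"
proof (rule fps_ext)
  fix N
  have "m dvd N \<longleftrightarrow> m dvd (N - m)" if "m \<le> N"
    using that by (metis dvd_minus_self not_less)
  moreover have "\<not> m dvd N" if "0 < N" "N < m"
    using that by (auto dest: dvd_imp_le)
  ultimately show "(geom_fps m * (1 - fps_X ^ m)) $ N = 1 $ N"
    using assms by (auto simp: geom_fps_def algebra_simps fps_X_power_mult_nth)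
qed

lemma subst_tpow_N_term:
  assumes "0 < m"
  shows "(1 - fps_X ^ Suc k) * subst_tpow (N_term n m) k =
     (\<Sum>j\<le>k. fps_X ^ (j * m + n) :: 'a::comm_ring_1 fps)"
proof -
  define g :: "'a fps" where "g = subst_tpow (geom_fps m) k"
  have g: "g * (1 - fps_X ^ m) = 1"
    using arg_cong[OF geom_fps_mult_one_minus_X_power[OF assms], of "\<lambda>G. subst_tpow G k"]
    by (simp add: g_def subst_tpow_mult subst_tpow_diff subst_tpow_one subst_tpow_power subst_tpow_X)
  have "subst_tpow (N_term n m) k = g * (\<Sum>i<m. (fps_X ^ Suc k) ^ i) * fps_X ^ n"
    by (simp add: N_term_def g_def subst_tpow_mult subst_tpow_sum subst_tpow_power subst_tpow_X
        subst_tpow_tvar mult.commute)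
  then have "(1 - fps_X ^ Suc k) * subst_tpow (N_term n m) k = g * (1 - (fps_X ^ Suc k) ^ m) * fps_X ^ n"
    by (simp only: one_diff_power_eq [symmetric] mult_ac)
  also have "\<dots> = g * (1 - (fps_X ^ m) ^ Suc k) * fps_X ^ n"
    by (simp only: power_mult [symmetric] mult.commute)
  also have "\<dots> = g * (1 - fps_X ^ m) * (\<Sum>j<Suc k. (fps_X ^ m) ^ j) * fps_X ^ n"
    by (simp only: one_diff_power_eq [symmetric] mult_ac)
  also have "\<dots> = (\<Sum>j\<le>k. fps_X ^ (j * m + n))"
    by (simp add: g lessThan_Suc_atMost sum_distrib_left sum_distrib_right power_add
        power_mult [symmetric] mult.commute)
  finally show ?thesis .
qed

definition tconst_part :: "'a::comm_ring_1 poly fps \<Rightarrow> 'a poly fps" where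
  "tconst_part G = Abs_fps (\<lambda>n. [:bcoeff G n 0:])"

definition weighted_sum ::
    "'a::comm_ring_1 poly fps \<Rightarrow> nat \<Rightarrow> (nat \<Rightarrow> nat \<Rightarrow> 'a poly fps) \<Rightarrow> 'a poly fps" where
  "weighted_sum G N B = (\<Sum>n\<in>{1..N}. \<Sum>m\<in>{1..degree (G $ n)}. fps_const [:bcoeff G n m:] * B n m)"

definition series_upto :: "'a::comm_ring_1 poly fps \<Rightarrow> nat \<Rightarrow> 'a poly fps" where
  "series_upto G N = tconst_part G + weighted_sum G N (\<lambda>n m. fps_const (monom 1 m) * fps_X ^ n)"

definition N_op_upto :: "'a::comm_ring_1 poly fps \<Rightarrow> nat \<Rightarrow> 'a poly fps" where
  "N_op_upto G N = tconst_part G + weighted_sum G N N_term"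

lemma subst_tpow_tconst_part: "subst_tpow (tconst_part G) k = subst_tzero G"
proof (rule fps_ext)
  fix N
  have "subst_tpow (tconst_part G) k $ N = (\<Sum>n\<le>N. if n = N then bcoeff G N 0 else 0)"
    unfolding subst_tpow_nth tconst_part_def by (intro sum.cong refl) (auto simp: coeff_pCons split: nat.split)
  then show "subst_tpow (tconst_part G) k $ N = subst_tzero G $ N"
    by (simp add: subst_tzero_def)
qed

lemma subst_tpow_weighted_sum:
  "subst_tpow (weighted_sum G N B) k =
     (\<Sum>n\<in>{1..N}. \<Sum>m\<in>{1..degree (G $ n)}. fps_const (bcoeff G n m) * subst_tpow (B n m) k)"
  unfolding weighted_sum_def subst_tpow_sum subst_tpow_const_mult ..

lemma series_upto_nth:
  assumes "G $ 0 = 0" "i \<le> N"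
  shows "series_upto G N $ i = G $ i"
proof (cases "i = 0")
  case True
  then show ?thesis using assms(1) by (simp add: series_upto_def weighted_sum_def tconst_part_def bcoeff_def fps_sum_nth)
next
  case False
  have "weighted_sum G N (\<lambda>n m. fps_const (monom 1 m) * fps_X ^ n) $ i =
      (\<Sum>n\<in>{1..N}. if n = i then \<Sum>m\<in>{1..degree (G $ i)}. monom (coeff (G $ i) m) m else 0)"
    unfolding weighted_sum_def fps_sum_nth by (intro sum.cong refl) (auto simp: bcoeff_def smult_monom)
  also have "\<dots> = (\<Sum>m\<in>{1..degree (G $ i)}. monom (coeff (G $ i) m) m)"
    using False assms(2) by simp
  finally have "series_upto G N $ i = monom (coeff (G $ i) 0) 0 + (\<Sum>m\<in>{1..degree (G $ i)}. monom (coeff (G $ i) m) m)"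
    by (simp add: series_upto_def tconst_part_def bcoeff_def monom_0)
  also have "\<dots> = (\<Sum>m\<le>degree (G $ i). monom (coeff (G $ i) m) m)"
    by (simp add: atMost_atLeast0 sum.atLeast_Suc_atMost)
  finally show ?thesis
    by (simp only: poly_as_sum_of_monoms)
qed

lemma N_op_upto_nth:
  assumes "i \<le> N"
  shows "N_op_upto G N $ i = N_op G $ i"
proof -
  have N_term_vanishes: "N_term n m $ i = 0" if "i < n" for n m :: nat
    using that by (simp add: N_term_def fps_X_power_mult_right_nth)
  have "(\<Sum>n\<in>{1..N}. \<Sum>m\<in>{1..degree (G $ n)}. smult (bcoeff G n m) (N_term n m $ i))
      = (\<Sum>n\<in>{1..i}. \<Sum>m\<in>{1..degree (G $ n)}. smult (bcoeff G n m) (N_term n m $ i))"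
    by (intro sum.mono_neutral_right) (use assms in \<open>auto simp: not_le N_term_vanishes\<close>)
  then show ?thesis
    by (simp add: N_op_upto_def N_op_def weighted_sum_def tconst_part_def fps_sum_nth)
qed

lemma subst_tpow_N_op_upto:
  "(1 - fps_X ^ Suc k) * subst_tpow (N_op_upto F N) k =
     (1 - fps_X ^ Suc k) * subst_tzero F + (\<Sum>j\<le>k. subst_tpow (series_upto F N) j - subst_tzero F)"
proof -
  have "(1 - fps_X ^ Suc k) * subst_tpow (N_op_upto F N) k - (1 - fps_X ^ Suc k) * subst_tzero F =
      (\<Sum>n\<in>{1..N}. \<Sum>m\<in>{1..degree (F $ n)}. fps_const (bcoeff F n m) * ((1 - fps_X ^ Suc k) * subst_tpow (N_term n m) k))"
    by (simp add: N_op_upto_def subst_tpow_add subst_tpow_tconst_part subst_tpow_weighted_sum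
        algebra_simps sum_distrib_left)
  also have "\<dots> = (\<Sum>n\<in>{1..N}. \<Sum>m\<in>{1..degree (F $ n)}. \<Sum>j\<le>k. fps_const (bcoeff F n m) * fps_X ^ (j * m + n))"
    by (intro sum.cong refl) (simp add: subst_tpow_N_term sum_distrib_left del: power_Suc)
  also have "\<dots> = (\<Sum>j\<le>k. \<Sum>n\<in>{1..N}. \<Sum>m\<in>{1..degree (F $ n)}. fps_const (bcoeff F n m) * fps_X ^ (j * m + n))"
    by (simp only: sum.swap [of _ "{..k}"])
  also have "\<dots> = (\<Sum>j\<le>k. subst_tpow (series_upto F N) j - subst_tzero F)"
    by (simp add: series_upto_def subst_tpow_add subst_tpow_tconst_part subst_tpow_weighted_sum
        subst_tpow_monom pcompose_monom_monom fps_of_poly_monom' power_add)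
  finally show ?thesis by (simp add: algebra_simps)
qed

lemma subst_tpow_N_op:
  assumes "F $ 0 = 0"
  shows "(1 - fps_X ^ Suc k) * subst_tpow (N_op F) k =
     (1 - fps_X ^ Suc k) * subst_tzero F + (\<Sum>j\<le>k. subst_tpow F j - subst_tzero F)"
proof (rule fps_ext)
  fix N
  have "fps_cutoff (Suc N) (N_op F) = fps_cutoff (Suc N) (N_op_upto F N)"
    by (simp add: fps_cutoff_eq_fps_cutoff_iff N_op_upto_nth)
  then have N_op: "fps_cutoff (Suc N) (subst_tpow (N_op F) k) = fps_cutoff (Suc N) (subst_tpow (N_op_upto F N) k)"
    by (rule subst_tpow_cutoff_cong)
  have "fps_cutoff (Suc N) F = fps_cutoff (Suc N) (series_upto F N)"
    by (simp add: fps_cutoff_eq_fps_cutoff_iff series_upto_nth assms)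
  then have F: "subst_tpow F j $ N = subst_tpow (series_upto F N) j $ N" for j
    by (metis subst_tpow_cutoff_cong fps_cutoff_nth lessI)
  have "((1 - fps_X ^ Suc k) * subst_tpow (N_op F) k) $ N = ((1 - fps_X ^ Suc k) * subst_tpow (N_op_upto F N) k) $ N"
    by (metis N_op fps_cutoff_right_mult_nth lessI)
  also have "\<dots> = ((1 - fps_X ^ Suc k) * subst_tzero F + (\<Sum>j\<le>k. subst_tpow (series_upto F N) j - subst_tzero F)) $ N"
    by (simp only: subst_tpow_N_op_upto)
  also have "\<dots> = ((1 - fps_X ^ Suc k) * subst_tzero F + (\<Sum>j\<le>k. subst_tpow F j - subst_tzero F)) $ N"
    by (simp add: fps_sum_nth F)
  finally show "((1 - fps_X ^ Suc k) * subst_tpow (N_op F) k) $ N =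
      ((1 - fps_X ^ Suc k) * subst_tzero F + (\<Sum>j\<le>k. subst_tpow F j - subst_tzero F)) $ N" .
qed

lemma rational_fps_add: "rational_fps f \<Longrightarrow> rational_fps g \<Longrightarrow> rational_fps (f + g)"
proof -
  assume "rational_fps f" "rational_fps g"
  then obtain p q p' q' where "coeff q 0 \<noteq> 0" "f * fps_of_poly q = fps_of_poly p"
    and "coeff q' 0 \<noteq> 0" "g * fps_of_poly q' = fps_of_poly p'"
    unfolding rational_fps_def by blast
  then have "(f + g) * fps_of_poly (q * q') = fps_of_poly (p * q' + p' * q)"
    and "coeff (q * q') 0 \<noteq> 0"
    by (simp_all add: fps_of_poly_mult fps_of_poly_add algebra_simps coeff_mult_0)
  then show ?thesis unfolding rational_fps_def by blast
qed

lemma rational_fps_mult: "rational_fps f \<Longrightarrow> rational_fps g \<Longrightarrow> rational_fps (f * g)"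
proof -
  assume "rational_fps f" "rational_fps g"
  then obtain p q p' q' where "coeff q 0 \<noteq> 0" "f * fps_of_poly q = fps_of_poly p"
    and "coeff q' 0 \<noteq> 0" "g * fps_of_poly q' = fps_of_poly p'"
    unfolding rational_fps_def by blast
  moreover have "(f * g) * fps_of_poly (q * q') = (f * fps_of_poly q) * (g * fps_of_poly q')"
    by (simp add: fps_of_poly_mult mult_ac)
  ultimately have "(f * g) * fps_of_poly (q * q') = fps_of_poly (p * p')"
    and "coeff (q * q') 0 \<noteq> 0"
    by (simp_all add: fps_of_poly_mult coeff_mult_0)
  then show ?thesis unfolding rational_fps_def by blast
qed

lemma rational_fps_of_poly: "rational_fps (fps_of_poly p)"
  unfolding rational_fps_def by (rule exI[of _ p], rule exI[of _ 1]) simp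

lemma rational_fps_uminus: "rational_fps f \<Longrightarrow> rational_fps (- f)"
  using rational_fps_mult[OF rational_fps_of_poly[of "-1"]] by (simp add: fps_of_poly_uminus)

lemma rational_fps_diff: "rational_fps f \<Longrightarrow> rational_fps g \<Longrightarrow> rational_fps (f - g)"
  using rational_fps_add[of f "- g"] rational_fps_uminus[of g] by simp

lemma rational_fps_sum: "(\<And>i. i \<in> A \<Longrightarrow> rational_fps (f i)) \<Longrightarrow> rational_fps (\<Sum>i\<in>A. f i)"
  by (induction A rule: infinite_finite_induct)
    (simp_all add: rational_fps_add rational_fps_of_poly[of 0, simplified])

lemma rational_fps_cancel_poly:
  assumes "rational_fps (fps_of_poly a * g)" "coeff a 0 \<noteq> 0"
  shows "rational_fps g"
proof -
  obtain p q where "coeff q 0 \<noteq> 0" "fps_of_poly a * g * fps_of_poly q = fps_of_poly p"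
    using assms(1) unfolding rational_fps_def by blast
  then have "g * fps_of_poly (a * q) = fps_of_poly p" "coeff (a * q) 0 \<noteq> 0"
    using assms(2) by (simp_all add: fps_of_poly_mult mult_ac coeff_mult_0)
  then show ?thesis unfolding rational_fps_def by blast
qed

theorem mainTheorem6:
  fixes F :: "'a::field poly fps"
  assumes "F $ 0 = 0"
    and "very_nice F"
  shows "nice (N_op F)"
  unfolding nice_def
proof
  fix k
  define a :: "'a poly" where "a = 1 - monom 1 (Suc k)"
  have a: "fps_of_poly a = 1 - fps_X ^ Suc k" "coeff a 0 \<noteq> 0"
    by (simp_all add: a_def fps_of_poly_diff fps_of_poly_monom')
  have "fps_of_poly a * subst_tpow (N_op F) k =
      fps_of_poly a * subst_tzero F + (\<Sum>j\<le>k. subst_tpow F j - subst_tzero F)"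
    unfolding a(1) by (rule subst_tpow_N_op [OF assms(1)])
  moreover have "rational_fps (subst_tzero F)" "\<And>j. rational_fps (subst_tpow F j)"
    using assms(2) unfolding very_nice_def nice_def by auto
  ultimately have "rational_fps (fps_of_poly a * subst_tpow (N_op F) k)"
    by (simp add: rational_fps_add rational_fps_mult rational_fps_of_poly rational_fps_sum rational_fps_diff)
  then show "rational_fps (subst_tpow (N_op F) k)"
    using a(2) by (rule rational_fps_cancel_poly)
qed

end
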